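(* Let $X$ be a compact topological space and $(\mathcal{B},\mathcal{B}',\langle\cdot,\cdot\rangle,k)$ an RKBS with kernel on $X$ such that: $\{k(x,\cdot):x\in X\}$ is linearly independent; $\mathcal{B}$ has the universal property; the map $x\mapsto k(x,\cdot)\in\mathcal{B}'$ is continuous. Let $(\varphi_t)_{t\ge0}$ be a semiflow on $X$ (so $X$ is positively invariant) such that $(t,x)\mapsto\varphi_t(x)$ is continuous. For $T>0$ and $x\in X$ let $b'_{T,x}:=\int_0^T k(\varphi_s(x),\cdot)\,ds\in\mathcal{B}'$. Then $b'_{T,x}\in D(C)$ for all $T>0$, $x\in X$, where $C$ is the generator of the Perron–Frobenius semigroup. In particular, $C$ is densely defined.
   Context: RKBS with kernel on $X$: $(\mathcal{B},\mathcal{B}',\langle\cdot,\cdot\rangle,k)$, $\mathcal{B},\mathcal{B}'$ Banach spaces of functions on $X$ (pointwise operations), continuous point evaluations on $\mathcal{B}$, $\langle\cdot,\cdot\rangle:\mathcal{B}\times\mathcal{B}'\to\mathbb{C}$ continuous bilinear, $k(x,\cdot)\in\mathcal{B}'$ with $g(x)=\langle g,k(x,\cdot)\rangle$ for all $g\in\mathcal{B}$, $x\in X$. Universal property: $\mathcal{B}\subset\mathcal{C}(X)$ is dense in $\mathcal{C}(X)$ for the sup norm. Semiflow: $\varphi_t:X\to X$, $\varphi_0=\mathrm{id}$, $\varphi_{t+s}=\varphi_t\circ\varphi_s$. Perron–Frobenius semigroup: $K_t$ is the linear extension of $k(x,\cdot)\mapsto k(\varphi_t(x),\cdot)$ on $\mathrm{Span}\{k(x,\cdot):x\in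 X\}$, further extended to $D:=\{\int_Xk(y,\cdot)\,d\mu(y):\mu\in M(X)\}$ ($M(X)$ the finite signed Borel measures, integrals as Bochner integrals in $\mathcal{B}'$) by $\bar K_t\big(\int_Xk(y,\cdot)\,d\mu(y)\big):=\int_Xk(\varphi_t(y),\cdot)\,d\mu(y)$ (this is well defined under the stated assumptions); note $b'_{T,x}\in D$ with $\mu$ the measure $\int g\,d\mu=\int_0^Tg(\varphi_s(x))\,ds$. The generator $C$ is $Cg:=\lim_{t\searrow0}\frac1t(\bar K_tg-g)$ (limit in $\mathcal{B}'$), with $D(C)$ the set of $g\in D$ for which this limit exists. Densely defined means w.r.t. $\langle\cdot,\cdot\rangle$: $g\in\mathcal{B}$ and $\langle g,h\rangle=0$ for all $h\in D(C)$ imply $g=0$. *)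

theory Defs
  imports "HOL-Analysis.Analysis"
begin

text \<open>Bochner integral for functions with values in an arbitrary (not necessarily separable)
  real Banach space: the library's has_bochner_integral requires second countability,
  so we give the standard definition (a.e. limit of simple integrable functions with
  L1-convergence) directly.\<close>
definition bochner_int :: "'x measure \<Rightarrow> ('x \<Rightarrow> 'v::banach) \<Rightarrow> 'v \<Rightarrow> bool" where
  "bochner_int M f v \<longleftrightarrow> (\<exists>s. (\<forall>i. Bochner_Integration.simple_bochner_integrable M (s i))
      \<and> (AE y in M. (\<lambda>i. s i y) \<longlonglongrightarrow> f y)
      \<and> (\<lambda>i. \<integral>\<^sup>+y. ennreal (norm (f y - s i y)) \<partial>M) \<longlonglongrightarrow> 0
      \<and> (\<lambda>i. Bochner_Integration.simple_bochner_integral M (s i)) \<longlonglongrightarrow> v)"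

text \<open>A (real) Banach space type 'v realised, via an injective map ev, as a space of
  complex-valued functions on 'a with pointwise operations, closed under complex scalar
  multiplication with absolutely homogeneous norm, i.e. a complex Banach space of functions.\<close>
definition complex_fun_space :: "('v::banach \<Rightarrow> 'a \<Rightarrow> complex) \<Rightarrow> bool" where
  "complex_fun_space ev \<longleftrightarrow> inj ev
     \<and> (\<forall>v w. ev (v + w) = (\<lambda>x. ev v x + ev w x))
     \<and> (\<forall>r v. ev (r *\<^sub>R v) = (\<lambda>x. complex_of_real r * ev v x))
     \<and> (\<forall>v z. \<exists>w. ev w = (\<lambda>x. z * ev v x) \<and> norm w = cmod z * norm v)"

text \<open>RKBS with kernel: B (type 'b, realisation ev), B' (type 'c, realisation ev'),
  pairing p, and kernel x \<mapsto> k(x,.) given as kern x \<in> B' (so k(x,y) = ev' (kern x) y).\<close>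
definition rkbs :: "('b::banach \<Rightarrow> 'a \<Rightarrow> complex) \<Rightarrow> ('c::banach \<Rightarrow> 'a \<Rightarrow> complex)
    \<Rightarrow> ('b \<Rightarrow> 'c \<Rightarrow> complex) \<Rightarrow> ('a \<Rightarrow> 'c) \<Rightarrow> bool" where
  "rkbs ev ev' p kern \<longleftrightarrow>
     complex_fun_space ev \<and> complex_fun_space ev'
     \<and> (\<forall>x. \<exists>c. \<forall>g. cmod (ev g x) \<le> c * norm g)
     \<and> (\<forall>g1 g2 h. p (g1 + g2) h = p g1 h + p g2 h)
     \<and> (\<forall>g h1 h2. p g (h1 + h2) = p g h1 + p g h2)
     \<and> (\<forall>g g' h z. ev g' = (\<lambda>x. z * ev g x) \<longrightarrow> p g' h = z * p g h)
     \<and> (\<forall>g h h' z. ev' h' = (\<lambda>x. z * ev' h x) \<longrightarrow> p g h' = z * p g h)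
     \<and> (\<exists>M. \<forall>g h. cmod (p g h) \<le> M * norm g * norm h)
     \<and> (\<forall>g x. ev g x = p g (kern x))"

definition kernel_lin_indep :: "('c \<Rightarrow> 'a \<Rightarrow> complex) \<Rightarrow> ('a \<Rightarrow> 'c) \<Rightarrow> bool" where
  "kernel_lin_indep ev' kern \<longleftrightarrow>
     (\<forall>F c. finite F \<longrightarrow> (\<forall>y. (\<Sum>x\<in>F. c x * ev' (kern x) y) = 0) \<longrightarrow> (\<forall>x\<in>F. c x = 0))"

definition universal :: "('b \<Rightarrow> 'a::topological_space \<Rightarrow> complex) \<Rightarrow> bool" where
  "universal ev \<longleftrightarrow> (\<forall>g. continuous_on UNIV (ev g))
     \<and> (\<forall>f. continuous_on UNIV f \<longrightarrow> (\<forall>\<epsilon>>0. \<exists>g. \<forall>x. cmod (ev g x - f x) < \<epsilon>))"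

definition semiflow :: "(real \<Rightarrow> 'a \<Rightarrow> 'a) \<Rightarrow> bool" where
  "semiflow \<phi> \<longleftrightarrow> \<phi> 0 = id \<and> (\<forall>t s. t \<ge> 0 \<longrightarrow> s \<ge> 0 \<longrightarrow> \<phi> (t + s) = \<phi> t \<circ> \<phi> s)"

text \<open>Finite (positive) Borel measures on 'a; finite signed measures are represented as
  differences M1 - M2 of two of them (Jordan decomposition).\<close>
definition fin_borel :: "'a::topological_space measure \<Rightarrow> bool" where
  "fin_borel M \<longleftrightarrow> sets M = sets (borel :: 'a measure) \<and> finite_measure M"

definition Dom :: "('a::topological_space \<Rightarrow> 'c::banach) \<Rightarrow> 'c set" where
  "Dom kern = {h. \<exists>M1 M2 v1 v2. fin_borel M1 \<and> fin_borel M2 \<and>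
      bochner_int M1 kern v1 \<and> bochner_int M2 kern v2 \<and> h = v1 - v2}"

definition Kbar :: "('a::topological_space \<Rightarrow> 'c::banach) \<Rightarrow> (real \<Rightarrow> 'a \<Rightarrow> 'a) \<Rightarrow> real \<Rightarrow> 'c \<Rightarrow> 'c" where
  "Kbar kern \<phi> t g = (THE h. \<exists>M1 M2 v1 v2 w1 w2. fin_borel M1 \<and> fin_borel M2 \<and>
      bochner_int M1 kern v1 \<and> bochner_int M2 kern v2 \<and> g = v1 - v2 \<and>
      bochner_int M1 (\<lambda>y. kern (\<phi> t y)) w1 \<and> bochner_int M2 (\<lambda>y. kern (\<phi> t y)) w2 \<and>
      h = w1 - w2)"

definition domC :: "('a::topological_space \<Rightarrow> 'c::banach) \<Rightarrow> (real \<Rightarrow> 'a \<Rightarrow> 'a) \<Rightarrow> 'c set" where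
  "domC kern \<phi> = {g \<in> Dom kern. \<exists>L. ((\<lambda>t. (1 / t) *\<^sub>R (Kbar kern \<phi> t g - g)) \<longlongrightarrow> L) (at_right 0)}"

definition bprime :: "('a \<Rightarrow> 'c::banach) \<Rightarrow> (real \<Rightarrow> 'a \<Rightarrow> 'a) \<Rightarrow> real \<Rightarrow> 'a \<Rightarrow> 'c" where
  "bprime kern \<phi> T x = (THE v. bochner_int (restrict_space lborel {0..T}) (\<lambda>s. kern (\<phi> s x)) v)"

definition densely_defined :: "('b::zero \<Rightarrow> 'c \<Rightarrow> complex) \<Rightarrow> 'c set \<Rightarrow> bool" where
  "densely_defined p S \<longleftrightarrow> (\<forall>g. (\<forall>h\<in>S. p g h = 0) \<longrightarrow> g = 0)"

end

theory Submission
  imports Defs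
begin

text \<open>The orbit integral b'(T, x) is the Bochner integral of the kernel against the image of
  Lebesgue measure on [0, T] under s \<mapsto> \<phi> s x. Applying the Perron-Frobenius operator
  therefore shifts the orbit, K_t b'(T, x) = integral of k(\<phi> s x) over [t, T + t], and the
  difference quotient tends to k(\<phi> T x) - k(x) by the fundamental theorem of calculus.

  The real work is that K_t is well defined. If two differences of finite measures integrate the
  kernel to the same element of B', then pairing with B shows that they integrate every function
  in B alike, hence, by the universal property, every continuous scalar function. A partition of
  unity subordinate to a finite \<epsilon>-net of the compact set G(X) transfers this to every continuous
  G : X \<rightarrow> B', in particular to k(\<phi> t y).

  Density: if g \<in> B annihilates all b'(T, x), then the integral of g(\<phi> s x) over [0, T] vanishes
  for every T > 0, and letting T \<rightarrow> 0 gives g(x) = 0.\<close>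

section \<open>Bochner integrals in Banach spaces without countability assumptions\<close>

lemma simple_bochner_integrableD:
  "Bochner_Integration.simple_bochner_integrable M s \<Longrightarrow> simple_function M s"
  by (auto elim: simple_bochner_integrable.cases)

lemma bochner_int_simple:
  assumes "Bochner_Integration.simple_bochner_integrable M s"
  shows "bochner_int M s (Bochner_Integration.simple_bochner_integral M s)"
  unfolding bochner_int_def
  by (rule exI[of _ "\<lambda>_. s"]) (auto simp: assms)

lemma simple_bochner_integrable_zero: "Bochner_Integration.simple_bochner_integrable M (\<lambda>y. 0)"
  by (rule simple_bochner_integrable.intros) auto

lemma simple_bochner_integral_zero:
  "Bochner_Integration.simple_bochner_integral M (\<lambda>y. 0 :: 'v::real_normed_vector) = 0"
  unfolding simple_bochner_integral_def by (rule sum.neutral) auto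

text \<open>Without second countability a difference of Borel functions need not be Borel;
  here the finite range of \<open>s\<close> saves the day.\<close>
lemma borel_measurable_norm_diff_simple_function:
  fixes F :: "'x \<Rightarrow> 'c::real_normed_vector"
  assumes F: "F \<in> borel_measurable M" and s: "simple_function M s"
  shows "(\<lambda>y. norm (F y - s y)) \<in> borel_measurable M"
proof -
  let ?g = "\<lambda>y. \<Sum>c\<in>s`space M. indicator {x\<in>space M. s x = c} y * norm (F y - c)"
  have eq: "norm (F y - s y) = ?g y" if "y \<in> space M" for y
  proof -
    have "?g y = (\<Sum>c\<in>s`space M. if c = s y then norm (F y - c) else 0)"
      by (rule sum.cong) (auto simp: indicator_def that)
    also have "\<dots> = norm (F y - s y)"
      using that simple_functionD(1)[OF s] by (simp add: sum.delta')
    finally show ?thesis by simp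
  qed
  have "(\<lambda>y. norm (F y - c)) \<in> borel_measurable M" for c
  proof -
    have "(\<lambda>z. norm (z - c)) \<in> borel_measurable borel"
      by (intro borel_measurable_continuous_onI continuous_intros)
    from measurable_compose[OF F this] show ?thesis by (simp add: o_def)
  qed
  moreover have "{x\<in>space M. s x = c} \<in> sets M" for c
  proof -
    have "{x\<in>space M. s x = c} = s -` {c} \<inter> space M" by auto
    then show ?thesis using simple_functionD(2)[OF s] by simp
  qed
  ultimately have "?g \<in> borel_measurable M"
    by (intro borel_measurable_sum borel_measurable_times borel_measurable_indicator)
  then show ?thesis using eq by (subst measurable_cong[where g = ?g]) auto
qed

lemma simple_bochner_integral_norm_diff_le:
  fixes F G :: "'x \<Rightarrow> 'c::real_normed_vector"
  assumes s: "Bochner_Integration.simple_bochner_integrable M s"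
    and t: "Bochner_Integration.simple_bochner_integrable M t"
    and mF: "F \<in> borel_measurable M" and mG: "G \<in> borel_measurable M"
    and d0: "d \<ge> 0" and bd: "\<And>y. y \<in> space M \<Longrightarrow> norm (F y - G y) \<le> d"
  shows "ennreal (norm (Bochner_Integration.simple_bochner_integral M s
      - Bochner_Integration.simple_bochner_integral M t))
    \<le> (\<integral>\<^sup>+y. ennreal (norm (F y - s y)) \<partial>M) + (\<integral>\<^sup>+y. ennreal (norm (G y - t y)) \<partial>M)
      + ennreal d * emeasure M (space M)"
proof -
  have m1: "(\<lambda>y. norm (F y - s y)) \<in> borel_measurable M"
    by (rule borel_measurable_norm_diff_simple_function[OF mF simple_bochner_integrableD[OF s]])
  have m2: "(\<lambda>y. norm (G y - t y)) \<in> borel_measurable M"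
    by (rule borel_measurable_norm_diff_simple_function[OF mG simple_bochner_integrableD[OF t]])
  have "ennreal (norm (Bochner_Integration.simple_bochner_integral M s
      - Bochner_Integration.simple_bochner_integral M t))
      = norm (Bochner_Integration.simple_bochner_integral M (\<lambda>x. s x - t x))"
    using s t by (subst simple_bochner_integral_diff) auto
  also have "\<dots> \<le> Bochner_Integration.simple_bochner_integral M (\<lambda>x. norm (s x - t x))"
    using simple_bochner_integrable_compose2[of "(-)" M s t] s t
    by (auto intro!: simple_bochner_integral_norm_bound)
  also have "\<dots> = (\<integral>\<^sup>+x. norm (s x - t x) \<partial>M)"
    using simple_bochner_integrable_compose2[of "\<lambda>x y. norm (x - y)" M s t] s t
    by (auto intro!: simple_bochner_integral_eq_nn_integral)
  also have "\<dots> \<le> (\<integral>\<^sup>+x. (ennreal (norm (F x - s x)) + ennreal (norm (G x - t x))) + ennreal d \<partial>M)"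
  proof (rule nn_integral_mono)
    fix x assume x: "x \<in> space M"
    have "norm (s x - t x) \<le> norm (F x - s x) + norm (G x - t x) + d"
      using bd[OF x] norm_triangle_ineq4[of "s x - F x" "t x - G x"]
      by (smt (verit, best) norm_diff_triangle_ineq norm_minus_commute diff_diff_eq2
          add_diff_cancel_left' diff_add_cancel)
    then show "ennreal (norm (s x - t x))
        \<le> (ennreal (norm (F x - s x)) + ennreal (norm (G x - t x))) + ennreal d"
      by (metis ennreal_leI ennreal_plus norm_ge_zero add_nonneg_nonneg d0)
  qed
  also have "\<dots> = (\<integral>\<^sup>+y. ennreal (norm (F y - s y)) \<partial>M) + (\<integral>\<^sup>+y. ennreal (norm (G y - t y)) \<partial>M)
      + (\<integral>\<^sup>+x. ennreal d \<partial>M)"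
    using m1 m2 by (simp add: nn_integral_add)
  finally show ?thesis by simp
qed

lemma bochner_int_norm_diff_le:
  fixes F G :: "'x \<Rightarrow> 'c::banach"
  assumes fm: "finite_measure M" and bF: "bochner_int M F v" and bG: "bochner_int M G w"
    and mF: "F \<in> borel_measurable M" and mG: "G \<in> borel_measurable M"
    and d0: "d \<ge> 0" and bd: "\<And>y. y \<in> space M \<Longrightarrow> norm (F y - G y) \<le> d"
  shows "norm (v - w) \<le> d * measure M (space M)"
proof -
  obtain s where s: "\<And>i. Bochner_Integration.simple_bochner_integrable M (s i)"
    and sL: "(\<lambda>i. \<integral>\<^sup>+y. ennreal (norm (F y - s i y)) \<partial>M) \<longlonglongrightarrow> 0"
    and sv: "(\<lambda>i. Bochner_Integration.simple_bochner_integral M (s i)) \<longlonglongrightarrow> v"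
    using bF unfolding bochner_int_def by blast
  obtain t where t: "\<And>i. Bochner_Integration.simple_bochner_integrable M (t i)"
    and tL: "(\<lambda>i. \<integral>\<^sup>+y. ennreal (norm (G y - t i y)) \<partial>M) \<longlonglongrightarrow> 0"
    and tw: "(\<lambda>i. Bochner_Integration.simple_bochner_integral M (t i)) \<longlonglongrightarrow> w"
    using bG unfolding bochner_int_def by blast
  have "(\<lambda>i. ennreal (norm (Bochner_Integration.simple_bochner_integral M (s i)
      - Bochner_Integration.simple_bochner_integral M (t i)))) \<longlonglongrightarrow> ennreal (norm (v - w))"
    by (intro tendsto_ennrealI tendsto_norm tendsto_diff sv tw)
  moreover have "(\<lambda>i. (\<integral>\<^sup>+y. ennreal (norm (F y - s i y)) \<partial>M) + (\<integral>\<^sup>+y. ennreal (norm (G y - t i y)) \<partial>M)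
      + ennreal d * emeasure M (space M)) \<longlonglongrightarrow> 0 + 0 + ennreal d * emeasure M (space M)"
    by (intro tendsto_add sL tL tendsto_const)
  ultimately have "ennreal (norm (v - w)) \<le> 0 + 0 + ennreal d * emeasure M (space M)"
    by (rule LIMSEQ_le)
       (use simple_bochner_integral_norm_diff_le[OF s t mF mG d0 bd] in auto)
  also have "\<dots> = ennreal (d * measure M (space M))"
    using finite_measure.emeasure_eq_measure[OF fm] d0 by (simp add: ennreal_mult)
  finally show ?thesis
    using d0 by (simp add: ennreal_le_iff)
qed

lemma bochner_int_unique:
  fixes F :: "'x \<Rightarrow> 'c::banach"
  assumes "finite_measure M" "F \<in> borel_measurable M" "bochner_int M F v" "bochner_int M F w"
  shows "v = w"
  using bochner_int_norm_diff_le[OF assms(1,3,4,2,2), of 0] by simp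

primrec first_center :: "real \<Rightarrow> 'c::real_normed_vector list \<Rightarrow> 'c \<Rightarrow> 'c" where
  "first_center e [] z = 0"
| "first_center e (c # cs) z = (if z \<in> ball c e then c else first_center e cs z)"

lemma dist_first_center_less:
  "z \<in> (\<Union>c\<in>set cs. ball c e) \<Longrightarrow> dist (first_center e cs z) z < e"
  by (induction cs) (auto simp: dist_commute)

lemma first_center_in: "first_center e cs z \<in> insert 0 (set cs)"
  by (induction cs) auto

lemma borel_measurable_first_center: "first_center e cs \<in> borel_measurable borel"
proof (induction cs)
  case (Cons c cs)
  have "(\<lambda>z. if z \<in> ball c e then c else first_center e cs z) \<in> borel_measurable borel"
    by (rule measurable_If_set) (use Cons in auto)
  then show ?case by (simp add: fun_eq_iff)
qed simp

lemma simple_function_uniform_approx: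
  fixes F :: "'x \<Rightarrow> 'c::real_normed_vector"
  assumes F: "F \<in> borel_measurable M" and K: "compact K" "F ` space M \<subseteq> K" and e: "e > 0"
  obtains s where "simple_function M s" and "\<And>y. y \<in> space M \<Longrightarrow> norm (F y - s y) \<le> e"
proof -
  have "K \<subseteq> (\<Union>c\<in>K. ball c e)" using e by auto
  then obtain C where C: "C \<subseteq> K" "finite C" "K \<subseteq> (\<Union>c\<in>C. ball c e)"
    using compactE_image[OF K(1), of K "\<lambda>c. ball c e"] by blast
  obtain cs where cs: "set cs = C" using finite_list[OF C(2)] by blast
  define s where "s = (\<lambda>y. first_center e cs (F y))"
  have s_meas: "s \<in> borel_measurable M"
    unfolding s_def using measurable_compose[OF F borel_measurable_first_center] by (simp add: o_def)
  have "s ` space M \<subseteq> insert 0 (set cs)"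
    unfolding s_def using first_center_in by blast
  then have "finite (s ` space M)" by (rule finite_subset) simp
  with s_meas have "simple_function M s" by (rule simple_function_borel_measurable)
  moreover have "norm (F y - s y) \<le> e" if "y \<in> space M" for y
  proof -
    have "F y \<in> (\<Union>c\<in>set cs. ball c e)" using that K(2) C(3) cs by blast
    from dist_first_center_less[OF this] show ?thesis
      unfolding s_def by (simp add: dist_norm norm_minus_commute)
  qed
  ultimately show ?thesis by (rule that)
qed

lemma simple_bochner_integrable_uniform_approx:
  fixes F :: "'x \<Rightarrow> 'c::real_normed_vector"
  assumes fm: "finite_measure M" and F: "F \<in> borel_measurable M"
    and K: "compact K" "F ` space M \<subseteq> K"
  obtains s where "\<And>n. Bochner_Integration.simple_bochner_integrable M (s n)"
    and "\<And>n y. y \<in> space M \<Longrightarrow> norm (F y - s n y) \<le> inverse (real (Suc n))"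
proof -
  have "\<exists>s. Bochner_Integration.simple_bochner_integrable M s \<and>
      (\<forall>y\<in>space M. norm (F y - s y) \<le> inverse (real (Suc n)))" for n
  proof -
    obtain s where s: "simple_function M s" "\<And>y. y \<in> space M \<Longrightarrow> norm (F y - s y) \<le> inverse (real (Suc n))"
      using simple_function_uniform_approx[OF F K, of "inverse (real (Suc n))"] by auto
    moreover have "Bochner_Integration.simple_bochner_integrable M s"
      by (rule simple_bochner_integrable.intros[OF s(1)])
         (use finite_measure.emeasure_finite[OF fm] in auto)
    ultimately show ?thesis by blast
  qed
  then obtain s where "\<forall>n. Bochner_Integration.simple_bochner_integrable M (s n) \<and>
      (\<forall>y\<in>space M. norm (F y - s n y) \<le> inverse (real (Suc n)))" by metis
  then show ?thesis by (intro that) auto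
qed

lemma bochner_int_uniform_limit:
  fixes F :: "'x \<Rightarrow> 'c::banach"
  assumes fm: "finite_measure M"
    and s: "\<And>n. Bochner_Integration.simple_bochner_integrable M (s n)"
    and bd: "\<And>n y. y \<in> space M \<Longrightarrow> norm (F y - s n y) \<le> e n"
    and e: "e \<longlonglongrightarrow> 0"
    and lim: "(\<lambda>n. Bochner_Integration.simple_bochner_integral M (s n)) \<longlonglongrightarrow> v"
  shows "bochner_int M F v"
  unfolding bochner_int_def
proof (intro exI[of _ s] conjI allI s lim)
  show "AE y in M. (\<lambda>i. s i y) \<longlonglongrightarrow> F y"
  proof (rule AE_I2)
    fix y assume y: "y \<in> space M"
    have "(\<lambda>n. s n y - F y) \<longlonglongrightarrow> 0"
      by (rule Lim_null_comparison[OF _ e]) (use bd y in \<open>auto simp: norm_minus_commute\<close>)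
    then show "(\<lambda>i. s i y) \<longlonglongrightarrow> F y" by (rule LIM_zero_cancel)
  qed
  let ?m = "measure M (space M)"
  have le: "(\<integral>\<^sup>+y. ennreal (norm (F y - s i y)) \<partial>M) \<le> ennreal (max 0 (e i) * ?m)" for i
  proof -
    have "(\<integral>\<^sup>+y. ennreal (norm (F y - s i y)) \<partial>M) \<le> (\<integral>\<^sup>+y. ennreal (max 0 (e i)) \<partial>M)"
    proof (rule nn_integral_mono)
      fix y assume "y \<in> space M"
      then have "norm (F y - s i y) \<le> max 0 (e i)" using bd[of y i] by linarith
      then show "ennreal (norm (F y - s i y)) \<le> ennreal (max 0 (e i))" by (rule ennreal_leI)
    qed
    also have "\<dots> = ennreal (max 0 (e i) * ?m)"
      using finite_measure.emeasure_eq_measure[OF fm] by (simp add: ennreal_mult)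
    finally show ?thesis .
  qed
  have "(\<lambda>i. ennreal (max 0 (e i) * ?m)) \<longlonglongrightarrow> ennreal (max 0 0 * ?m)"
    by (intro tendsto_ennrealI tendsto_mult tendsto_max e tendsto_const)
  then have lim0: "(\<lambda>i. ennreal (max 0 (e i) * ?m)) \<longlonglongrightarrow> 0" by simp
  show "(\<lambda>i. \<integral>\<^sup>+y. ennreal (norm (F y - s i y)) \<partial>M) \<longlonglongrightarrow> 0"
    by (rule tendsto_sandwich[OF _ _ tendsto_const lim0]) (use le in auto)
qed

lemma simple_bochner_integral_uniform_limit:
  fixes F :: "'x \<Rightarrow> 'c::banach"
  assumes fm: "finite_measure M" and b: "bochner_int M F v" and F: "F \<in> borel_measurable M"
    and s: "\<And>n. Bochner_Integration.simple_bochner_integrable M (s n)"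
    and bd: "\<And>n y. y \<in> space M \<Longrightarrow> norm (F y - s n y) \<le> e n"
    and e0: "\<And>n. e n \<ge> 0" and e: "e \<longlonglongrightarrow> 0"
  shows "(\<lambda>n. Bochner_Integration.simple_bochner_integral M (s n)) \<longlonglongrightarrow> v"
proof -
  have "norm (v - Bochner_Integration.simple_bochner_integral M (s n)) \<le> e n * measure M (space M)" for n
    by (rule bochner_int_norm_diff_le[OF fm b bochner_int_simple[OF s] F
          borel_measurable_simple_function[OF simple_bochner_integrableD[OF s]] e0 bd])
  then have le: "norm (Bochner_Integration.simple_bochner_integral M (s n) - v) \<le> e n * measure M (space M)" for n
    by (simp add: norm_minus_commute)
  have "(\<lambda>n. e n * measure M (space M)) \<longlonglongrightarrow> 0"
    using tendsto_mult[OF e tendsto_const, of "measure M (space M)"] by simp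
  then have "(\<lambda>n. Bochner_Integration.simple_bochner_integral M (s n) - v) \<longlonglongrightarrow> 0"
    by (rule Lim_null_comparison[OF always_eventually, rotated]) (use le in auto)
  then show ?thesis by (rule LIM_zero_cancel)
qed

lemma simple_bochner_integrable_sum_scaleR:
  fixes r :: "'i \<Rightarrow> 'x \<Rightarrow> real" and v :: "'i \<Rightarrow> 'v::real_normed_vector"
  assumes "finite C" "\<And>c. c \<in> C \<Longrightarrow> Bochner_Integration.simple_bochner_integrable M (r c)"
  shows "Bochner_Integration.simple_bochner_integrable M (\<lambda>y. \<Sum>c\<in>C. r c y *\<^sub>R v c)"
    and "Bochner_Integration.simple_bochner_integral M (\<lambda>y. \<Sum>c\<in>C. r c y *\<^sub>R v c) =
      (\<Sum>c\<in>C. Bochner_Integration.simple_bochner_integral M (r c) *\<^sub>R v c)"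
proof -
  have "Bochner_Integration.simple_bochner_integrable M (\<lambda>y. \<Sum>c\<in>C. r c y *\<^sub>R v c) \<and>
    Bochner_Integration.simple_bochner_integral M (\<lambda>y. \<Sum>c\<in>C. r c y *\<^sub>R v c) =
      (\<Sum>c\<in>C. Bochner_Integration.simple_bochner_integral M (r c) *\<^sub>R v c)"
    using assms
  proof (induction C rule: finite_induct)
    case empty
    then show ?case by (simp add: simple_bochner_integrable_zero simple_bochner_integral_zero)
  next
    case (insert c C)
    let ?R = "\<lambda>y. \<Sum>c\<in>C. r c y *\<^sub>R v c"
    have rc: "Bochner_Integration.simple_bochner_integrable M (r c)" using insert by simp
    have IH: "Bochner_Integration.simple_bochner_integrable M ?R"
       "Bochner_Integration.simple_bochner_integral M ?R =
          (\<Sum>c\<in>C. Bochner_Integration.simple_bochner_integral M (r c) *\<^sub>R v c)"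
      using insert by auto
    have sc: "Bochner_Integration.simple_bochner_integrable M (\<lambda>y. r c y *\<^sub>R v c)"
      using simple_bochner_integrable_compose2[of "\<lambda>x y. x *\<^sub>R v c" M "r c" "r c"] rc by simp
    have "Bochner_Integration.simple_bochner_integrable M (\<lambda>y. r c y *\<^sub>R v c + ?R y)"
      using simple_bochner_integrable_compose2[of "(+)" M "\<lambda>y. r c y *\<^sub>R v c" ?R] sc IH(1)
      by simp
    moreover have "Bochner_Integration.simple_bochner_integral M (\<lambda>y. r c y *\<^sub>R v c + ?R y)
       = Bochner_Integration.simple_bochner_integral M (r c) *\<^sub>R v c
         + Bochner_Integration.simple_bochner_integral M ?R"
      using simple_bochner_integral_add[OF sc IH(1)]
        simple_bochner_integral_linear[OF bounded_linear.linear[OF bounded_linear_scaleR_left] rc]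
      by simp
    ultimately show ?case using IH(2) insert by simp
  qed
  then show "Bochner_Integration.simple_bochner_integrable M (\<lambda>y. \<Sum>c\<in>C. r c y *\<^sub>R v c)"
    and "Bochner_Integration.simple_bochner_integral M (\<lambda>y. \<Sum>c\<in>C. r c y *\<^sub>R v c) =
      (\<Sum>c\<in>C. Bochner_Integration.simple_bochner_integral M (r c) *\<^sub>R v c)"
    by auto
qed

lemma integral_tendsto_uniform_approx:
  fixes f :: "'x \<Rightarrow> 'd::{banach,second_countable_topology}"
  assumes fm: "finite_measure M" and f: "f \<in> borel_measurable M"
    and B: "\<And>y. y \<in> space M \<Longrightarrow> norm (f y) \<le> B"
    and s: "\<And>n. Bochner_Integration.simple_bochner_integrable M (s n)"
    and bd: "\<And>n y. y \<in> space M \<Longrightarrow> norm (f y - s n y) \<le> e n" and e: "e \<longlonglongrightarrow> 0"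
  shows "(\<lambda>n. integral\<^sup>L M (s n)) \<longlonglongrightarrow> integral\<^sup>L M f"
proof -
  obtain E where E: "\<And>n. norm (e n) \<le> E"
    using convergent_imp_Bseq[OF convergentI[OF e]] by (meson BseqE)
  show ?thesis
  proof (rule integral_dominated_convergence[where w="\<lambda>_. B + E"])
    show "s n \<in> borel_measurable M" for n
      by (rule borel_measurable_simple_function[OF simple_bochner_integrableD[OF s]])
    show "integrable M (\<lambda>_. B + E)" using finite_measure.integrable_const[OF fm] .
    show "AE y in M. (\<lambda>n. s n y) \<longlonglongrightarrow> f y"
    proof (rule AE_I2)
      fix y assume y: "y \<in> space M"
      have "(\<lambda>n. s n y - f y) \<longlonglongrightarrow> 0"
        by (rule Lim_null_comparison[OF always_eventually e])
           (use bd[OF y] in \<open>simp add: norm_minus_commute\<close>)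
      then show "(\<lambda>n. s n y) \<longlonglongrightarrow> f y" by (rule LIM_zero_cancel)
    qed
    show "AE y in M. norm (s n y) \<le> B + E" for n
    proof (rule AE_I2)
      fix y assume y: "y \<in> space M"
      have "norm (s n y) \<le> norm (f y) + norm (f y - s n y)"
        by (metis add_diff_cancel_left' diff_add_cancel norm_triangle_ineq4 norm_minus_commute add.commute)
      then show "norm (s n y) \<le> B + E" using B[OF y] bd[OF y, of n] E[of n] by (auto simp: abs_le_iff)
    qed
  qed (rule f)
qed

lemma bochner_int_sum_scaleR:
  fixes \<psi> :: "'v::banach \<Rightarrow> 'x \<Rightarrow> real"
  assumes fm: "finite_measure M" and C: "finite C"
    and meas: "\<And>c. c \<in> C \<Longrightarrow> \<psi> c \<in> borel_measurable M"
    and bnd: "\<And>c y. c \<in> C \<Longrightarrow> y \<in> space M \<Longrightarrow> \<bar>\<psi> c y\<bar> \<le> B"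
  shows "bochner_int M (\<lambda>y. \<Sum>c\<in>C. \<psi> c y *\<^sub>R c) (\<Sum>c\<in>C. integral\<^sup>L M (\<psi> c) *\<^sub>R c)"
proof -
  have "\<exists>r. \<forall>n. Bochner_Integration.simple_bochner_integrable M (r n) \<and>
      (\<forall>y\<in>space M. norm (\<psi> c y - r n y) \<le> inverse (real (Suc n)))" if c: "c \<in> C" for c
  proof -
    have "-B \<le> \<psi> c y \<and> \<psi> c y \<le> B" if "y \<in> space M" for y
      using bnd[OF c that] unfolding abs_le_iff by linarith
    then have "\<psi> c ` space M \<subseteq> {-B..B}" by auto
    with simple_bochner_integrable_uniform_approx[OF fm meas[OF c] compact_Icc]
    show ?thesis by metis
  qed
  then obtain r where r: "\<And>c n. c \<in> C \<Longrightarrow> Bochner_Integration.simple_bochner_integrable M (r c n)"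
    and rb: "\<And>c n y. c \<in> C \<Longrightarrow> y \<in> space M \<Longrightarrow> norm (\<psi> c y - r c n y) \<le> inverse (real (Suc n))"
    by metis
  define s where "s n y = (\<Sum>c\<in>C. r c n y *\<^sub>R c)" for n y
  have s_simple: "Bochner_Integration.simple_bochner_integrable M (s n)"
    and s_integral: "Bochner_Integration.simple_bochner_integral M (s n) =
      (\<Sum>c\<in>C. Bochner_Integration.simple_bochner_integral M (r c n) *\<^sub>R c)" for n
    unfolding s_def using simple_bochner_integrable_sum_scaleR[OF C r, where v = "\<lambda>c. c"] by auto
  let ?K = "\<Sum>c\<in>C. norm c"
  show ?thesis
  proof (rule bochner_int_uniform_limit[OF fm s_simple])
    show "(\<lambda>n. inverse (real (Suc n)) * ?K) \<longlonglongrightarrow> 0"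
      using tendsto_mult[OF LIMSEQ_inverse_real_of_nat tendsto_const, of ?K] by simp
    show "norm ((\<Sum>c\<in>C. \<psi> c y *\<^sub>R c) - s n y) \<le> inverse (real (Suc n)) * ?K"
      if y: "y \<in> space M" for n y
    proof -
      have "norm ((\<Sum>c\<in>C. \<psi> c y *\<^sub>R c) - s n y) = norm (\<Sum>c\<in>C. (\<psi> c y - r c n y) *\<^sub>R c)"
        unfolding s_def by (simp add: sum_subtractf scaleR_diff_left)
      also have "\<dots> \<le> (\<Sum>c\<in>C. \<bar>\<psi> c y - r c n y\<bar> * norm c)"
        using norm_sum[of "\<lambda>c. (\<psi> c y - r c n y) *\<^sub>R c" C] by simp
      also have "\<dots> \<le> (\<Sum>c\<in>C. inverse (real (Suc n)) * norm c)"
        using rb[OF _ y] by (intro sum_mono mult_right_mono) auto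
      finally show ?thesis by (simp add: sum_distrib_left)
    qed
    have "(\<lambda>n. \<Sum>c\<in>C. integral\<^sup>L M (r c n) *\<^sub>R c) \<longlonglongrightarrow> (\<Sum>c\<in>C. integral\<^sup>L M (\<psi> c) *\<^sub>R c)"
    proof (intro tendsto_sum tendsto_scaleR tendsto_const)
      fix c assume c: "c \<in> C"
      show "(\<lambda>n. integral\<^sup>L M (r c n)) \<longlonglongrightarrow> integral\<^sup>L M (\<psi> c)"
        by (rule integral_tendsto_uniform_approx[OF fm meas[OF c] _ r[OF c] rb[OF c] LIMSEQ_inverse_real_of_nat])
           (use bnd[OF c] in auto)
    qed
    then show "(\<lambda>n. Bochner_Integration.simple_bochner_integral M (s n))
        \<longlonglongrightarrow> (\<Sum>c\<in>C. integral\<^sup>L M (\<psi> c) *\<^sub>R c)"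
      using r by (simp add: s_integral simple_bochner_integrable_eq_integral)
  qed
qed

lemma bochner_int_null_measure: "bochner_int (null_measure M) F 0"
  unfolding bochner_int_def
proof (rule exI[of _ "\<lambda>_ _. 0"], intro conjI allI)
  show "AE y in null_measure M. (\<lambda>i. 0) \<longlonglongrightarrow> F y"
    by (rule AE_I[where N = "space M"]) auto
qed (simp_all add: simple_bochner_integrable_zero simple_bochner_integral_zero)

section \<open>Bochner integrals over intervals and along curves\<close>

lemma finite_measure_restrict_Icc: "finite_measure (restrict_space lborel {a..b::real})"
  by (rule finite_measureI) (simp add: emeasure_restrict_space emeasure_lborel_Icc_eq)

lemma borel_measurable_restrict_Icc:
  fixes f :: "real \<Rightarrow> 'c::topological_space"
  assumes "continuous_on {a..b} f"
  shows "f \<in> borel_measurable (restrict_space lborel {a..b})"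
proof -
  have "sets (restrict_space lborel {a..b}) = sets (restrict_space borel {a..b})"
    by (rule sets_restrict_space_cong) simp
  then have "measurable (restrict_space lborel {a..b}) borel
      = measurable (restrict_space borel {a..b}) (borel :: 'c measure)"
    by (rule measurable_cong_sets) simp
  then show ?thesis using borel_measurable_continuous_on_restrict[OF assms] by simp
qed

lemma has_integral_indicator_scaleR_Icc:
  fixes y :: "'c::real_normed_vector"
  assumes A: "A \<in> sets borel" "A \<subseteq> {a..b::real}"
  shows "((\<lambda>x. indicator A x *\<^sub>R y) has_integral measure lborel A *\<^sub>R y) {a..b}"
proof -
  have "emeasure lborel A \<le> emeasure lborel {a..b}" using A(2) by (rule emeasure_mono) simp
  then have "emeasure lborel A < \<infinity>"
    using emeasure_lborel_Icc_eq[of a b] by (simp add: le_less_trans)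
  then have "((\<lambda>x. 1::real) has_integral measure lborel A) A"
    by (subst has_integral_iff_emeasure_lborel) (use A emeasure_eq_ennreal_measure[of lborel A] in auto)
  then have "((\<lambda>x. if x \<in> A then 1 else (0::real)) has_integral measure lborel A) {a..b}"
    using A(2) by (subst has_integral_restrict) auto
  from has_integral_scaleR_left[OF this, of y]
  show ?thesis by (simp add: indicator_def of_bool_def)
qed

lemma has_integral_simple_bochner_integral_Icc:
  fixes s :: "real \<Rightarrow> 'c::banach"
  assumes s: "simple_function (restrict_space lborel {a..b}) s"
  shows "(s has_integral Bochner_Integration.simple_bochner_integral (restrict_space lborel {a..b}) s) {a..b}"
proof -
  let ?R = "restrict_space lborel {a..b}"
  let ?A = "\<lambda>y. {x\<in>{a..b}. s x = y}"
  have sp: "space ?R = {a..b}" by simp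
  have fin: "finite (s ` {a..b})" using simple_functionD(1)[OF s] by simp
  have A: "?A y \<in> sets borel" for y
  proof -
    have "?A y = s -` {y} \<inter> space ?R" using sp by auto
    then have "?A y \<in> sets ?R" using simple_functionD(2)[OF s] by simp
    then show ?thesis by (subst (asm) sets_restrict_space_iff) auto
  qed
  have m: "measure ?R {x\<in>space ?R. s x = y} = measure lborel (?A y)" for y
  proof -
    have "measure ?R (?A y) = measure lborel (?A y)" by (rule measure_restrict_space) auto
    then show ?thesis using sp by simp
  qed
  have "((\<lambda>x. indicator (?A y) x *\<^sub>R y) has_integral
      (measure ?R {x\<in>space ?R. s x = y} *\<^sub>R y)) {a..b}" for y
    unfolding m by (rule has_integral_indicator_scaleR_Icc[OF A]) auto
  from has_integral_sum[OF fin this]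
  have "((\<lambda>x. \<Sum>y\<in>s`{a..b}. indicator (?A y) x *\<^sub>R y) has_integral
      Bochner_Integration.simple_bochner_integral ?R s) {a..b}"
    by (simp add: simple_bochner_integral_def)
  then show ?thesis
  proof (rule has_integral_eq[rotated])
    fix x assume x: "x \<in> {a..b}"
    have "(\<Sum>y\<in>s`{a..b}. indicator (?A y) x *\<^sub>R y) = (\<Sum>y\<in>s`{a..b}. if y = s x then s x else 0)"
      using x by (intro sum.cong) (auto simp: indicator_def)
    also have "\<dots> = s x" using x fin by (simp add: sum.delta')
    finally show "(\<Sum>y\<in>s`{a..b}. indicator (?A y) x *\<^sub>R y) = s x" .
  qed
qed

lemma simple_bochner_integral_tendsto_integral_Icc:
  fixes f :: "real \<Rightarrow> 'c::banach"
  assumes ab: "a \<le> b" and f: "continuous_on {a..b} f"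
    and s: "\<And>n. simple_function (restrict_space lborel {a..b}) (s n)"
    and bd: "\<And>n y. y \<in> {a..b} \<Longrightarrow> norm (f y - s n y) \<le> inverse (real (Suc n))"
  shows "(\<lambda>n. Bochner_Integration.simple_bochner_integral (restrict_space lborel {a..b}) (s n))
    \<longlonglongrightarrow> integral {a..b} f"
proof -
  let ?R = "restrict_space lborel {a..b}"
  have le: "norm (Bochner_Integration.simple_bochner_integral ?R (s n) - integral {a..b} f)
      \<le> inverse (real (Suc n)) * (b - a)" for n
  proof -
    have "((\<lambda>y. s n y - f y) has_integral
        (Bochner_Integration.simple_bochner_integral ?R (s n) - integral {a..b} f)) (cbox a b)"
      using has_integral_diff[OF has_integral_simple_bochner_integral_Icc[OF s]
          integrable_integral[OF integrable_continuous_interval[OF f]]] by simp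
    then have "norm (Bochner_Integration.simple_bochner_integral ?R (s n) - integral {a..b} f)
        \<le> inverse (real (Suc n)) * Henstock_Kurzweil_Integration.content (cbox a b)"
      by (rule has_integral_bound[rotated]) (use bd in \<open>auto simp: norm_minus_commute\<close>)
    then show ?thesis using ab by simp
  qed
  have "(\<lambda>n. inverse (real (Suc n)) * (b - a)) \<longlonglongrightarrow> 0"
    using tendsto_mult[OF LIMSEQ_inverse_real_of_nat tendsto_const, of "b - a"] by simp
  then have "(\<lambda>n. Bochner_Integration.simple_bochner_integral ?R (s n) - integral {a..b} f) \<longlonglongrightarrow> 0"
    by (rule Lim_null_comparison[OF always_eventually, rotated]) (use le in auto)
  then show ?thesis by (rule LIM_zero_cancel)
qed

lemma bochner_int_Icc:
  fixes f :: "real \<Rightarrow> 'c::banach"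
  assumes ab: "a \<le> b" and f: "continuous_on {a..b} f"
  shows "bochner_int (restrict_space lborel {a..b}) f (integral {a..b} f)"
proof -
  let ?R = "restrict_space lborel {a..b}"
  obtain s where s: "\<And>n. Bochner_Integration.simple_bochner_integrable ?R (s n)"
    and bd: "\<And>n y. y \<in> space ?R \<Longrightarrow> norm (f y - s n y) \<le> inverse (real (Suc n))"
    using simple_bochner_integrable_uniform_approx[OF finite_measure_restrict_Icc
        borel_measurable_restrict_Icc[OF f] compact_continuous_image[OF f compact_Icc]]
    by auto
  show ?thesis
  proof (rule bochner_int_uniform_limit[OF finite_measure_restrict_Icc s bd LIMSEQ_inverse_real_of_nat])
    show "(\<lambda>n. Bochner_Integration.simple_bochner_integral ?R (s n)) \<longlonglongrightarrow> integral {a..b} f"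
      by (rule simple_bochner_integral_tendsto_integral_Icc[OF ab f])
         (use simple_bochner_integrableD[OF s] bd in auto)
  qed
qed

lemma simple_bochner_integral_distr:
  fixes s :: "'y \<Rightarrow> 'c::banach"
  assumes T: "T \<in> measurable M N" and s: "simple_function (distr M N T) s"
  shows "simple_function M (\<lambda>x. s (T x))"
    and "Bochner_Integration.simple_bochner_integral (distr M N T) s =
         Bochner_Integration.simple_bochner_integral M (\<lambda>x. s (T x))"
proof -
  have sN: "simple_function N s"
    using s simple_function_cong_algebra[of "distr M N T" N s] by simp
  show "simple_function M (\<lambda>x. s (T x))" by (rule simple_function_comp[OF T sN])
  have sub: "(\<lambda>x. s (T x)) ` space M \<subseteq> s ` space N" using measurable_space[OF T] by auto
  have "measure (distr M N T) {x\<in>space N. s x = y} = measure M {x\<in>space M. s (T x) = y}" for y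
  proof -
    have "{x\<in>space N. s x = y} = s -` {y} \<inter> space N" by auto
    then have "measure (distr M N T) {x\<in>space N. s x = y} = measure M (T -` {x\<in>space N. s x = y} \<inter> space M)"
      using measure_distr[OF T] simple_functionD(2)[OF sN] by simp
    also have "T -` {x\<in>space N. s x = y} \<inter> space M = {x\<in>space M. s (T x) = y}"
      using measurable_space[OF T] by auto
    finally show ?thesis .
  qed
  then have "Bochner_Integration.simple_bochner_integral (distr M N T) s
      = (\<Sum>y\<in>s ` space N. measure M {x\<in>space M. s (T x) = y} *\<^sub>R y)"
    unfolding simple_bochner_integral_def by simp
  also have "\<dots> = (\<Sum>y\<in>(\<lambda>x. s (T x)) ` space M. measure M {x\<in>space M. s (T x) = y} *\<^sub>R y)"
  proof (rule sum.mono_neutral_right[OF simple_functionD(1)[OF sN] sub], intro ballI)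
    fix y assume "y \<in> s ` space N - (\<lambda>x. s (T x)) ` space M"
    then have "{x\<in>space M. s (T x) = y} = {}" by blast
    then show "measure M {x\<in>space M. s (T x) = y} *\<^sub>R y = 0" by (metis measure_empty scale_zero_left)
  qed
  finally show "Bochner_Integration.simple_bochner_integral (distr M N T) s =
      Bochner_Integration.simple_bochner_integral M (\<lambda>x. s (T x))"
    by (simp add: simple_bochner_integral_def)
qed

section \<open>Finite Borel measures on a compact space\<close>

lemma fin_borel_space: "fin_borel M \<Longrightarrow> space M = UNIV"
  unfolding fin_borel_def by (metis sets_eq_imp_space_eq space_borel)

lemma fin_borel_finite_measure: "fin_borel M \<Longrightarrow> finite_measure M"
  unfolding fin_borel_def by simp

lemma fin_borel_null_measure: "fin_borel (null_measure borel)"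
  unfolding fin_borel_def by (auto intro!: finite_measureI)

lemma borel_measurable_fin_borel:
  assumes "fin_borel M" "continuous_on UNIV F"
  shows "F \<in> borel_measurable M"
proof -
  have "sets M = sets borel" using assms(1) unfolding fin_borel_def by simp
  then have "measurable M borel = measurable borel (borel :: 'b measure)"
    by (rule measurable_cong_sets) simp
  then show ?thesis using borel_measurable_continuous_onI[OF assms(2)] by simp
qed

lemma fin_borel_uniform_approx:
  fixes F :: "'a::topological_space \<Rightarrow> 'c::banach"
  assumes M: "fin_borel M" and X: "compact (UNIV :: 'a set)" and F: "continuous_on UNIV F"
  obtains s where "\<And>n. Bochner_Integration.simple_bochner_integrable M (s n)"
    and "\<And>n y. norm (F y - s n y) \<le> inverse (real (Suc n))"
  using simple_bochner_integrable_uniform_approx[OF fin_borel_finite_measure[OF M]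
      borel_measurable_fin_borel[OF M F] compact_continuous_image[OF F X]]
    fin_borel_space[OF M] by auto

lemma integrable_fin_borel:
  fixes f :: "'a::topological_space \<Rightarrow> 'd::{banach,second_countable_topology}"
  assumes M: "fin_borel M" and X: "compact (UNIV :: 'a set)" and f: "continuous_on UNIV f"
  shows "integrable M f"
proof -
  have "bounded (range f)" by (rule compact_imp_bounded[OF compact_continuous_image[OF f X]])
  then obtain B where B: "\<And>y. norm (f y) \<le> B" by (auto simp: bounded_iff)
  show ?thesis
    by (rule finite_measure.integrable_const_bound[OF fin_borel_finite_measure[OF M], where B=B])
       (use B borel_measurable_fin_borel[OF M f] in auto)
qed

lemma bochner_int_bounded_linear:
  fixes F :: "'a::topological_space \<Rightarrow> 'c::banach"
    and L :: "'c \<Rightarrow> 'd::{banach,second_countable_topology}"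
  assumes M: "fin_borel M" and X: "compact (UNIV :: 'a set)" and F: "continuous_on UNIV F"
    and b: "bochner_int M F v" and L: "bounded_linear L"
  shows "L v = integral\<^sup>L M (\<lambda>y. L (F y))"
proof -
  have fm: "finite_measure M" by (rule fin_borel_finite_measure[OF M])
  obtain s where s: "\<And>n. Bochner_Integration.simple_bochner_integrable M (s n)"
    and bd: "\<And>n y. norm (F y - s n y) \<le> inverse (real (Suc n))"
    using fin_borel_uniform_approx[OF M X F] by blast
  obtain K where K: "\<And>x. norm (L x) \<le> norm x * K" and K0: "K > 0"
    using bounded_linear.pos_bounded[OF L] by blast
  have LF: "continuous_on UNIV (\<lambda>y. L (F y))"
    by (rule continuous_on_compose2[OF linear_continuous_on[OF L] F]) auto
  then obtain B where B: "\<And>y. norm (L (F y)) \<le> B"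
    using compact_imp_bounded[OF compact_continuous_image[OF LF X]] by (auto simp: bounded_iff)
  have Ls: "Bochner_Integration.simple_bochner_integrable M (\<lambda>y. L (s n y))" for n
    using simple_bochner_integrable_compose2[of "\<lambda>x y. L x" M "s n" "s n"] s
      bounded_linear.linear[OF L] linear_0 by auto
  have "(\<lambda>n. L (Bochner_Integration.simple_bochner_integral M (s n))) \<longlonglongrightarrow> L v"
    by (intro bounded_linear.tendsto[OF L] simple_bochner_integral_uniform_limit[OF fm b
          borel_measurable_fin_borel[OF M F] s bd _ LIMSEQ_inverse_real_of_nat]) simp
  moreover have "L (Bochner_Integration.simple_bochner_integral M (s n)) = integral\<^sup>L M (\<lambda>y. L (s n y))" for n
    using simple_bochner_integral_linear[OF bounded_linear.linear[OF L] s]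
      simple_bochner_integrable_eq_integral[OF Ls] by simp
  ultimately have "(\<lambda>n. integral\<^sup>L M (\<lambda>y. L (s n y))) \<longlonglongrightarrow> L v" by simp
  moreover have "(\<lambda>n. integral\<^sup>L M (\<lambda>y. L (s n y))) \<longlonglongrightarrow> integral\<^sup>L M (\<lambda>y. L (F y))"
  proof (rule integral_tendsto_uniform_approx[OF fm borel_measurable_fin_borel[OF M LF] B Ls])
    show "norm (L (F y) - L (s n y)) \<le> inverse (real (Suc n)) * K" for n y
    proof -
      have "norm (L (F y) - L (s n y)) = norm (L (F y - s n y))"
        by (simp add: linear_diff[OF bounded_linear.linear[OF L]])
      also have "\<dots> \<le> norm (F y - s n y) * K" by (rule K)
      also have "\<dots> \<le> inverse (real (Suc n)) * K" using bd K0 by (intro mult_right_mono) auto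
      finally show ?thesis .
    qed
    show "(\<lambda>n. inverse (real (Suc n)) * K) \<longlonglongrightarrow> 0"
      using tendsto_mult[OF LIMSEQ_inverse_real_of_nat tendsto_const, of K] by simp
  qed
  ultimately show ?thesis by (rule LIMSEQ_unique)
qed

lemma fin_borel_distr_Icc:
  fixes \<gamma> :: "real \<Rightarrow> 'a::topological_space"
  assumes "continuous_on {a..b} \<gamma>"
  shows "fin_borel (distr (restrict_space lborel {a..b}) borel \<gamma>)"
  unfolding fin_borel_def
  using finite_measure.finite_measure_distr[OF finite_measure_restrict_Icc
      borel_measurable_restrict_Icc[OF assms]] by simp

lemma bochner_int_distr_Icc:
  fixes F :: "'a::topological_space \<Rightarrow> 'c::banach" and \<gamma> :: "real \<Rightarrow> 'a"
  assumes X: "compact (UNIV :: 'a set)" and F: "continuous_on UNIV F"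
    and \<gamma>: "continuous_on {0..T} \<gamma>" and T: "0 \<le> T"
  shows "bochner_int (distr (restrict_space lborel {0..T}) borel \<gamma>) F (integral {0..T} (\<lambda>s. F (\<gamma> s)))"
proof -
  let ?R = "restrict_space lborel {0..T}"
  let ?\<mu> = "distr ?R borel \<gamma>"
  have \<gamma>m: "\<gamma> \<in> measurable ?R borel" by (rule borel_measurable_restrict_Icc[OF \<gamma>])
  note fb = fin_borel_distr_Icc[OF \<gamma>]
  obtain s where s: "\<And>n. Bochner_Integration.simple_bochner_integrable ?\<mu> (s n)"
    and bd: "\<And>n y. norm (F y - s n y) \<le> inverse (real (Suc n))"
    using fin_borel_uniform_approx[OF fb X F] by blast
  note s_distr = simple_bochner_integral_distr[OF \<gamma>m simple_bochner_integrableD[OF s]]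
  have "(\<lambda>n. Bochner_Integration.simple_bochner_integral ?R (\<lambda>x. s n (\<gamma> x)))
      \<longlonglongrightarrow> integral {0..T} (\<lambda>s. F (\<gamma> s))"
    by (rule simple_bochner_integral_tendsto_integral_Icc[OF T
          continuous_on_compose2[OF F \<gamma>] s_distr(1) bd]) simp
  then show ?thesis
    by (intro bochner_int_uniform_limit[OF fin_borel_finite_measure[OF fb] s bd
          LIMSEQ_inverse_real_of_nat]) (simp add: s_distr(2))
qed

section \<open>Integrals of continuous functions against differences of measures\<close>

lemma partition_of_unity_subordinate_balls:
  fixes F :: "'a::topological_space \<Rightarrow> 'c::metric_space"
  assumes X: "compact (UNIV :: 'a set)" and F: "continuous_on UNIV F" and e: "e > 0"
  obtains C and \<psi> :: "'c \<Rightarrow> 'a \<Rightarrow> real"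
  where "finite C" and "\<And>c. continuous_on UNIV (\<psi> c)" and "\<And>c y. 0 \<le> \<psi> c y"
    and "\<And>y. (\<Sum>c\<in>C. \<psi> c y) = 1" and "\<And>c y. \<psi> c y \<noteq> 0 \<Longrightarrow> dist (F y) c < e"
proof -
  have K: "compact (range F)" by (rule compact_continuous_image[OF F X])
  have "range F \<subseteq> (\<Union>c\<in>range F. ball c e)" using e by auto
  then obtain C where C: "C \<subseteq> range F" "finite C" "range F \<subseteq> (\<Union>c\<in>C. ball c e)"
    using compactE_image[OF K, of "range F" "\<lambda>c. ball c e"] by blast
  define bump where "bump c y = max 0 (e - dist (F y) c)" for c y
  define S where "S y = (\<Sum>c\<in>C. bump c y)" for y
  have bump_nonneg: "0 \<le> bump c y" for c y unfolding bump_def by simp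
  have bump_cont: "continuous_on UNIV (bump c)" for c
    unfolding bump_def[abs_def] by (intro continuous_on_max continuous_on_diff continuous_on_dist F continuous_on_const)
  have S_pos: "S y > 0" for y
  proof -
    have "F y \<in> (\<Union>c\<in>C. ball c e)" using C(3) by blast
    then obtain c where c: "c \<in> C" "dist c (F y) < e" by auto
    then have "0 < bump c y" by (simp add: bump_def dist_commute)
    then show ?thesis unfolding S_def by (rule sum_pos2[OF C(2) c(1)]) (rule bump_nonneg)
  qed
  have S_cont: "continuous_on UNIV S"
    unfolding S_def[abs_def] by (intro continuous_on_sum bump_cont)
  define \<psi> where "\<psi> c y = bump c y / S y" for c y
  show ?thesis
  proof
    show "continuous_on UNIV (\<psi> c)" for c
      unfolding \<psi>_def[abs_def] using S_pos by (intro continuous_on_divide bump_cont S_cont) (simp add: less_le)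
    show "0 \<le> \<psi> c y" for c y unfolding \<psi>_def using bump_nonneg S_pos[of y] by simp
    show "(\<Sum>c\<in>C. \<psi> c y) = 1" for y
      unfolding \<psi>_def sum_divide_distrib[symmetric] using S_pos[of y] by (simp add: S_def)
    show "dist (F y) c < e" if "\<psi> c y \<noteq> 0" for c y
      using that by (auto simp: \<psi>_def bump_def)
  qed (rule C(2))
qed

lemma uniform_approx_partition_of_unity:
  fixes F :: "'a::topological_space \<Rightarrow> 'c::real_normed_vector"
  assumes X: "compact (UNIV :: 'a set)" and F: "continuous_on UNIV F" and e: "e > 0"
  obtains C and \<psi> :: "'c \<Rightarrow> 'a \<Rightarrow> real"
  where "finite C" and "\<And>c. continuous_on UNIV (\<psi> c)" and "\<And>c y. c \<in> C \<Longrightarrow> \<bar>\<psi> c y\<bar> \<le> 1"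
    and "\<And>y. norm (F y - (\<Sum>c\<in>C. \<psi> c y *\<^sub>R c)) \<le> e"
proof -
  obtain C and \<psi> :: "'c \<Rightarrow> 'a \<Rightarrow> real"
    where C: "finite C" and cont: "\<And>c. continuous_on UNIV (\<psi> c)" and nonneg: "\<And>c y. 0 \<le> \<psi> c y"
      and sum1: "\<And>y. (\<Sum>c\<in>C. \<psi> c y) = 1" and supp: "\<And>c y. \<psi> c y \<noteq> 0 \<Longrightarrow> dist (F y) c < e"
    using partition_of_unity_subordinate_balls[OF X F e] by blast
  show ?thesis
  proof
    show "\<bar>\<psi> c y\<bar> \<le> 1" if "c \<in> C" for c y
    proof -
      have "\<psi> c y \<le> (\<Sum>c\<in>C. \<psi> c y)" by (rule member_le_sum[OF that nonneg C])
      then show ?thesis using nonneg[of c y] sum1[of y] by simp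
    qed
    show "norm (F y - (\<Sum>c\<in>C. \<psi> c y *\<^sub>R c)) \<le> e" for y
    proof -
      have "F y - (\<Sum>c\<in>C. \<psi> c y *\<^sub>R c) = (\<Sum>c\<in>C. \<psi> c y *\<^sub>R (F y - c))"
        using sum1[of y] by (simp add: sum_subtractf scaleR_diff_right scaleR_sum_left[symmetric])
      also have "norm \<dots> \<le> (\<Sum>c\<in>C. \<psi> c y * e)"
      proof (rule order_trans[OF norm_sum sum_mono])
        show "norm (\<psi> c y *\<^sub>R (F y - c)) \<le> \<psi> c y * e" for c
          using supp[of c y] nonneg[of c y]
          by (cases "\<psi> c y = 0") (auto simp: dist_norm intro: mult_left_mono)
      qed
      also have "\<dots> = e" using sum1[of y] by (simp add: sum_distrib_right[symmetric])
      finally show ?thesis .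
    qed
  qed (use C cont in auto)
qed

lemma norm_integral_diff_le:
  fixes f h :: "'x \<Rightarrow> 'd::{banach,second_countable_topology}"
  assumes fm: "finite_measure M" and f: "integrable M f" and h: "integrable M h"
    and bd: "\<And>y. y \<in> space M \<Longrightarrow> norm (f y - h y) \<le> e"
  shows "norm (integral\<^sup>L M f - integral\<^sup>L M h) \<le> e * measure M (space M)"
proof -
  have "norm (integral\<^sup>L M f - integral\<^sup>L M h) = norm (integral\<^sup>L M (\<lambda>y. f y - h y))"
    using f h by simp
  also have "\<dots> \<le> integral\<^sup>L M (\<lambda>y. norm (f y - h y))" by (rule integral_norm_bound)
  also have "\<dots> \<le> integral\<^sup>L M (\<lambda>y. e)"
    by (rule integral_mono) (use f h bd finite_measure.integrable_const[OF fm] in auto)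
  finally show ?thesis by (simp add: mult.commute)
qed

lemma norm_diff_diff_le:
  fixes w1 w2 z1 z2 a1 a2 b1 b2 :: "'v::real_normed_vector"
  assumes "a1 - a2 = b1 - b2"
    and "norm (w1 - a1) \<le> d1" "norm (w2 - a2) \<le> d2" "norm (z1 - b1) \<le> d3" "norm (z2 - b2) \<le> d4"
  shows "norm ((w1 - w2) - (z1 - z2)) \<le> d1 + d2 + d3 + d4"
proof -
  have "(w1 - w2) - (z1 - z2) = ((w1 - a1) - (w2 - a2)) - ((z1 - b1) - (z2 - b2))"
    using assms(1) by (simp add: algebra_simps)
  also have "norm \<dots> \<le> (norm (w1 - a1) + norm (w2 - a2)) + (norm (z1 - b1) + norm (z2 - b2))"
    by (intro order_trans[OF norm_triangle_ineq4] add_mono norm_triangle_ineq4)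
  finally show ?thesis using assms(2-5) by linarith
qed

lemma eq_0_if_norm_le_eps_mult:
  fixes x :: "'v::real_normed_vector"
  assumes T: "T \<ge> 0" and le: "\<And>e. e > 0 \<Longrightarrow> norm x \<le> e * T"
  shows "x = 0"
proof -
  have "norm x \<le> 0 + e" if e: "e > 0" for e
  proof -
    have "norm x \<le> e / (T + 1) * T" using le[of "e / (T + 1)"] e T by simp
    also have "\<dots> \<le> e / (T + 1) * (T + 1)" using e T by (intro mult_left_mono) auto
    finally show ?thesis using T by simp
  qed
  then have "norm x \<le> 0" by (rule field_le_epsilon)
  then show ?thesis by simp
qed

lemma bochner_int_diff_eq_if_integrals_diff_eq:
  fixes G :: "'a::topological_space \<Rightarrow> 'c::banach"
  assumes X: "compact (UNIV :: 'a set)" and G: "continuous_on UNIV G"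
    and M1: "fin_borel M1" and M2: "fin_borel M2" and N1: "fin_borel N1" and N2: "fin_borel N2"
    and eq: "\<And>\<psi> :: 'a \<Rightarrow> real. continuous_on UNIV \<psi> \<Longrightarrow>
      integral\<^sup>L M1 \<psi> - integral\<^sup>L M2 \<psi> = integral\<^sup>L N1 \<psi> - integral\<^sup>L N2 \<psi>"
    and GM1: "bochner_int M1 G w1" and GM2: "bochner_int M2 G w2"
    and GN1: "bochner_int N1 G z1" and GN2: "bochner_int N2 G z2"
  shows "w1 - w2 = z1 - z2"
proof -
  let ?m = "\<lambda>M. measure M (space M)"
  have "w1 - w2 - (z1 - z2) = 0"
  proof (rule eq_0_if_norm_le_eps_mult)
    fix e :: real assume e: "e > 0"
    obtain C and \<psi> :: "'c \<Rightarrow> 'a \<Rightarrow> real"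
      where C: "finite C" and \<psi>_cont: "\<And>c. continuous_on UNIV (\<psi> c)"
        and \<psi>_bound: "\<And>c y. c \<in> C \<Longrightarrow> \<bar>\<psi> c y\<bar> \<le> 1"
        and approx: "\<And>y. norm (G y - (\<Sum>c\<in>C. \<psi> c y *\<^sub>R c)) \<le> e"
      using uniform_approx_partition_of_unity[OF X G e] by blast
    define \<Psi> where "\<Psi> y = (\<Sum>c\<in>C. \<psi> c y *\<^sub>R c)" for y
    define I where "I M = (\<Sum>c\<in>C. integral\<^sup>L M (\<psi> c) *\<^sub>R c)" for M
    have \<Psi>_cont: "continuous_on UNIV \<Psi>"
      unfolding \<Psi>_def[abs_def] by (intro continuous_intros \<psi>_cont)
    have close: "norm (w - I M) \<le> e * ?m M" if M: "fin_borel M" and w: "bochner_int M G w" for M w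
    proof (rule bochner_int_norm_diff_le[OF fin_borel_finite_measure[OF M] w _
          borel_measurable_fin_borel[OF M G] borel_measurable_fin_borel[OF M \<Psi>_cont]])
      show "bochner_int M \<Psi> (I M)"
        unfolding \<Psi>_def[abs_def] I_def
        by (rule bochner_int_sum_scaleR[OF fin_borel_finite_measure[OF M] C
              borel_measurable_fin_borel[OF M \<psi>_cont] \<psi>_bound])
    qed (use e approx in \<open>auto simp: \<Psi>_def\<close>)
    have "I M1 - I M2 = (\<Sum>c\<in>C. (integral\<^sup>L M1 (\<psi> c) - integral\<^sup>L M2 (\<psi> c)) *\<^sub>R c)"
      and "I N1 - I N2 = (\<Sum>c\<in>C. (integral\<^sup>L N1 (\<psi> c) - integral\<^sup>L N2 (\<psi> c)) *\<^sub>R c)"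
      unfolding I_def by (simp_all add: sum_subtractf scaleR_diff_left)
    then have "I M1 - I M2 = I N1 - I N2" using eq[OF \<psi>_cont] by simp
    from norm_diff_diff_le[OF this close[OF M1 GM1] close[OF M2 GM2] close[OF N1 GN1] close[OF N2 GN2]]
    show "norm (w1 - w2 - (z1 - z2)) \<le> e * (?m M1 + ?m M2 + ?m N1 + ?m N2)"
      by (simp add: algebra_simps)
  qed simp
  then show ?thesis by simp
qed

section \<open>The Perron--Frobenius operator on integrals of the kernel\<close>

lemma complex_fun_space_scaleR:
  "complex_fun_space ev \<Longrightarrow> ev (r *\<^sub>R v) = (\<lambda>x. complex_of_real r * ev v x)"
  unfolding complex_fun_space_def by blast

lemma rkbs_complex_fun_space:
  assumes "rkbs ev ev' p kern"
  shows "complex_fun_space ev" and "complex_fun_space ev'"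
  using assms unfolding rkbs_def by simp_all

lemma rkbs_bounded_linear_pairing:
  assumes R: "rkbs ev ev' p kern"
  shows "bounded_linear (p g)"
proof -
  have "\<exists>C. \<forall>g h. cmod (p g h) \<le> C * norm g * norm h" using R unfolding rkbs_def by blast
  then obtain C where C: "\<And>g h. cmod (p g h) \<le> C * norm g * norm h" by blast
  show ?thesis
  proof (rule bounded_linear_intro)
    show "p g (x + y) = p g x + p g y" for x y using R unfolding rkbs_def by blast
    show "p g (r *\<^sub>R x) = r *\<^sub>R p g x" for r x
    proof -
      have "ev' (r *\<^sub>R x) = (\<lambda>y. complex_of_real r * ev' x y)"
        by (rule complex_fun_space_scaleR[OF rkbs_complex_fun_space(2)[OF R]])
      then have "p g (r *\<^sub>R x) = complex_of_real r * p g x"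
        using R unfolding rkbs_def by blast
      then show ?thesis by (simp add: scaleR_conv_of_real)
    qed
    show "norm (p g x) \<le> norm x * (C * norm g)" for x
      using C[of g x] by (simp add: mult.commute mult.left_commute)
  qed
qed

lemma rkbs_eval: "rkbs ev ev' p kern \<Longrightarrow> ev g = (\<lambda>y. p g (kern y))"
  unfolding rkbs_def by auto

lemma rkbs_eq_0I:
  assumes R: "rkbs ev ev' p kern" and g: "\<And>x. ev g x = 0"
  shows "g = 0"
proof -
  have "ev (0 *\<^sub>R g) = (\<lambda>x. complex_of_real 0 * ev g x)"
    by (rule complex_fun_space_scaleR[OF rkbs_complex_fun_space(1)[OF R]])
  then have "ev 0 = ev g" using g by auto
  moreover have "inj ev"
    using rkbs_complex_fun_space(1)[OF R] unfolding complex_fun_space_def by blast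
  ultimately show ?thesis by (simp add: inj_eq)
qed

lemma integrals_diff_eq_if_kernel_integrals_diff_eq:
  fixes ev :: "'b::banach \<Rightarrow> 'a::topological_space \<Rightarrow> complex"
    and kern :: "'a \<Rightarrow> 'c::banach" and \<psi> :: "'a \<Rightarrow> real"
  assumes X: "compact (UNIV :: 'a set)" and R: "rkbs ev ev' p kern" and U: "universal ev"
    and k: "continuous_on UNIV kern"
    and M1: "fin_borel M1" and M2: "fin_borel M2" and N1: "fin_borel N1" and N2: "fin_borel N2"
    and kM1: "bochner_int M1 kern v1" and kM2: "bochner_int M2 kern v2"
    and kN1: "bochner_int N1 kern u1" and kN2: "bochner_int N2 kern u2"
    and eq: "v1 - v2 = u1 - u2" and \<psi>: "continuous_on UNIV \<psi>"
  shows "integral\<^sup>L M1 \<psi> - integral\<^sup>L M2 \<psi> = integral\<^sup>L N1 \<psi> - integral\<^sup>L N2 \<psi>"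
proof -
  let ?m = "\<lambda>M. measure M (space M)"
  have ev_cont: "continuous_on UNIV (ev g)" for g using U unfolding universal_def by blast
  have ev_eq: "integral\<^sup>L M1 (ev g) - integral\<^sup>L M2 (ev g) = integral\<^sup>L N1 (ev g) - integral\<^sup>L N2 (ev g)"
    for g
  proof -
    have bl: "bounded_linear (p g)" by (rule rkbs_bounded_linear_pairing[OF R])
    have int: "p g v = integral\<^sup>L M (ev g)" if "fin_borel M" "bochner_int M kern v" for M v
      using bochner_int_bounded_linear[OF that(1) X k that(2) bl] rkbs_eval[OF R, of g] by simp
    have "p g v1 - p g v2 = p g u1 - p g u2"
      using eq linear_diff[OF bounded_linear.linear[OF bl]] by metis
    then show ?thesis using int M1 M2 N1 N2 kM1 kM2 kN1 kN2 by simp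
  qed
  define f where "f y = complex_of_real (\<psi> y)" for y
  have f_cont: "continuous_on UNIV f" unfolding f_def[abs_def] by (intro continuous_on_of_real \<psi>)
  have "integral\<^sup>L M1 f - integral\<^sup>L M2 f - (integral\<^sup>L N1 f - integral\<^sup>L N2 f) = 0"
  proof (rule eq_0_if_norm_le_eps_mult)
    fix e :: real assume e: "e > 0"
    obtain g where g: "\<And>y. cmod (ev g y - f y) < e" using U f_cont e unfolding universal_def by blast
    have close: "norm (integral\<^sup>L M f - integral\<^sup>L M (ev g)) \<le> e * ?m M" if M: "fin_borel M" for M
      by (rule norm_integral_diff_le[OF fin_borel_finite_measure[OF M]
            integrable_fin_borel[OF M X f_cont] integrable_fin_borel[OF M X ev_cont]])
         (use g in \<open>simp add: norm_minus_commute less_imp_le\<close>)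
    from norm_diff_diff_le[OF ev_eq close[OF M1] close[OF M2] close[OF N1] close[OF N2]]
    show "norm (integral\<^sup>L M1 f - integral\<^sup>L M2 f - (integral\<^sup>L N1 f - integral\<^sup>L N2 f))
        \<le> e * (?m M1 + ?m M2 + ?m N1 + ?m N2)"
      by (simp add: algebra_simps)
  qed simp
  then have "complex_of_real (integral\<^sup>L M1 \<psi> - integral\<^sup>L M2 \<psi> - (integral\<^sup>L N1 \<psi> - integral\<^sup>L N2 \<psi>)) = 0"
    unfolding f_def by simp
  then show ?thesis by (simp only: of_real_eq_0_iff)
qed

lemma Kbar_eqI:
  fixes ev :: "'b::banach \<Rightarrow> 'a::topological_space \<Rightarrow> complex" and kern :: "'a \<Rightarrow> 'c::banach"
  assumes X: "compact (UNIV :: 'a set)" and R: "rkbs ev ev' p kern" and U: "universal ev"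
    and k: "continuous_on UNIV kern" and kt: "continuous_on UNIV (\<lambda>y. kern (\<phi> t y))"
    and M1: "fin_borel M1" and M2: "fin_borel M2"
    and v1: "bochner_int M1 kern v1" and v2: "bochner_int M2 kern v2"
    and w1: "bochner_int M1 (\<lambda>y. kern (\<phi> t y)) w1" and w2: "bochner_int M2 (\<lambda>y. kern (\<phi> t y)) w2"
  shows "Kbar kern \<phi> t (v1 - v2) = w1 - w2"
  unfolding Kbar_def
proof (rule the_equality)
  fix h assume "\<exists>N1 N2 u1 u2 z1 z2. fin_borel N1 \<and> fin_borel N2 \<and>
      bochner_int N1 kern u1 \<and> bochner_int N2 kern u2 \<and> v1 - v2 = u1 - u2 \<and>
      bochner_int N1 (\<lambda>y. kern (\<phi> t y)) z1 \<and> bochner_int N2 (\<lambda>y. kern (\<phi> t y)) z2 \<and> h = z1 - z2"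
  then obtain N1 N2 u1 u2 z1 z2 where N: "fin_borel N1" "fin_borel N2"
    and u: "bochner_int N1 kern u1" "bochner_int N2 kern u2" and eq: "v1 - v2 = u1 - u2"
    and z: "bochner_int N1 (\<lambda>y. kern (\<phi> t y)) z1" "bochner_int N2 (\<lambda>y. kern (\<phi> t y)) z2"
    and h: "h = z1 - z2"
    by blast
  have "w1 - w2 = z1 - z2"
    by (rule bochner_int_diff_eq_if_integrals_diff_eq[OF X kt M1 M2 N
          integrals_diff_eq_if_kernel_integrals_diff_eq[OF X R U k M1 M2 N v1 v2 u eq] w1 w2 z])
  then show "h = w1 - w2" using h by simp
qed (use M1 M2 v1 v2 w1 w2 in blast)

lemma bprime_eq_integral:
  fixes kern :: "'a \<Rightarrow> 'c::banach"
  assumes f: "continuous_on {0..T} (\<lambda>s. kern (\<phi> s x))" and T: "T \<ge> 0"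
  shows "bprime kern \<phi> T x = integral {0..T} (\<lambda>s. kern (\<phi> s x))"
  unfolding bprime_def
proof (rule the_equality)
  show "bochner_int (restrict_space lborel {0..T}) (\<lambda>s. kern (\<phi> s x)) (integral {0..T} (\<lambda>s. kern (\<phi> s x)))"
    by (rule bochner_int_Icc[OF T f])
  show "v = integral {0..T} (\<lambda>s. kern (\<phi> s x))"
    if "bochner_int (restrict_space lborel {0..T}) (\<lambda>s. kern (\<phi> s x)) v" for v
    by (rule bochner_int_unique[OF finite_measure_restrict_Icc borel_measurable_restrict_Icc[OF f]
          that bochner_int_Icc[OF T f]])
qed

section \<open>The generator on integrals along orbits\<close>

lemma integral_average_tendsto:
  fixes f :: "real \<Rightarrow> 'c::banach"
  assumes ab: "a < b" and f: "continuous_on {a..b} f"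
  shows "((\<lambda>t. (1 / t) *\<^sub>R integral {a..a+t} f) \<longlongrightarrow> f a) (at_right 0)"
proof -
  define \<Phi> where "\<Phi> u = integral {a..u} f" for u
  have "(\<Phi> has_vector_derivative f a) (at a within {a..b})"
    unfolding \<Phi>_def by (rule integral_has_vector_derivative[OF f]) (use ab in simp)
  then have lim: "((\<lambda>u. ((\<Phi> u - \<Phi> a) - (u - a) *\<^sub>R f a) /\<^sub>R norm (u - a)) \<longlongrightarrow> 0) (at a within {a..b})"
    by (simp add: has_vector_derivative_def has_derivative_at_within)
  have small: "\<forall>\<^sub>F t in at_right 0. 0 < t \<and> t < b - a"
    using eventually_at_right_real[of 0 "b - a"] ab by (simp add: greaterThanLessThan_iff)
  have "filterlim (\<lambda>t. a + t) (at a within {a..b}) (at_right 0)"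
    unfolding filterlim_at
  proof
    show "\<forall>\<^sub>F t in at_right 0. a + t \<in> {a..b} \<and> a + t \<noteq> a"
      using small by (rule eventually_mono) auto
    show "((\<lambda>t. a + t) \<longlongrightarrow> a) (at_right 0)"
      using tendsto_add[OF tendsto_const tendsto_ident_at, of a 0 "{0<..}"] by simp
  qed
  from filterlim_compose[OF lim this]
  have "((\<lambda>t. (1 / t) *\<^sub>R integral {a..a+t} f - f a) \<longlongrightarrow> 0) (at_right 0)"
    by (rule Lim_transform_eventually)
       (use small in \<open>auto elim!: eventually_mono simp: \<Phi>_def scaleR_diff_right divide_inverse\<close>)
  then show ?thesis by (rule LIM_zero_cancel)
qed

locale kernel_semiflow =
  fixes ev :: "'b::banach \<Rightarrow> 'a::topological_space \<Rightarrow> complex"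
    and ev' :: "'c::banach \<Rightarrow> 'a \<Rightarrow> complex"
    and p :: "'b \<Rightarrow> 'c \<Rightarrow> complex"
    and kern :: "'a \<Rightarrow> 'c"
    and \<phi> :: "real \<Rightarrow> 'a \<Rightarrow> 'a"
  assumes compact_space: "compact (UNIV :: 'a set)"
    and rkbs: "rkbs ev ev' p kern"
    and universal: "universal ev"
    and kern_cont: "continuous_on UNIV kern"
    and semiflow: "semiflow \<phi>"
    and flow_cont: "continuous_on ({0..} \<times> UNIV) (\<lambda>(t, x). \<phi> t x)"
begin

lemma continuous_on_flow:
  assumes "t \<ge> 0"
  shows "continuous_on UNIV (\<phi> t)"
proof -
  have "continuous_on UNIV (\<lambda>x. (\<lambda>(t, x). \<phi> t x) (t, x))"
    by (rule continuous_on_compose2[OF flow_cont]) (use assms in \<open>auto intro!: continuous_intros\<close>)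
  then show ?thesis by simp
qed

lemma continuous_on_orbit: "continuous_on {0..T} (\<lambda>s. \<phi> s x)"
proof -
  have "continuous_on {0..T} (\<lambda>s. (\<lambda>(t, x). \<phi> t x) (s, x))"
    by (rule continuous_on_compose2[OF flow_cont]) (auto intro!: continuous_intros)
  then show ?thesis by simp
qed

lemma continuous_on_kernel_orbit: "continuous_on {0..T} (\<lambda>s. kern (\<phi> s x))"
  by (rule continuous_on_compose2[OF kern_cont continuous_on_orbit]) simp

lemma bprime_eq_orbit_integral:
  "T \<ge> 0 \<Longrightarrow> bprime kern \<phi> T x = integral {0..T} (\<lambda>s. kern (\<phi> s x))"
  by (intro bprime_eq_integral continuous_on_kernel_orbit)

lemma bprime_in_Dom:
  assumes T: "T \<ge> 0"
  shows "bprime kern \<phi> T x \<in> Dom kern"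
  unfolding Dom_def bprime_eq_orbit_integral[OF T]
  using fin_borel_distr_Icc[OF continuous_on_orbit]
    bochner_int_distr_Icc[OF compact_space kern_cont continuous_on_orbit T]
    fin_borel_null_measure bochner_int_null_measure
  by fastforce

lemma Kbar_bprime:
  assumes T: "T \<ge> 0" and t: "t \<ge> 0"
  shows "Kbar kern \<phi> t (bprime kern \<phi> T x) = integral {t..T+t} (\<lambda>s. kern (\<phi> s x))"
proof -
  have kt: "continuous_on UNIV (\<lambda>y. kern (\<phi> t y))"
    by (rule continuous_on_compose2[OF kern_cont continuous_on_flow[OF t]]) simp
  note \<mu> = fin_borel_distr_Icc[OF continuous_on_orbit[of T x]]
    bochner_int_distr_Icc[OF compact_space kern_cont continuous_on_orbit[of T x] T]
    bochner_int_distr_Icc[OF compact_space kt continuous_on_orbit[of T x] T]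
  \<comment> \<open>the null measure serves as the negative part of the signed measure\<close>
  have "Kbar kern \<phi> t (integral {0..T} (\<lambda>s. kern (\<phi> s x)) - 0)
      = integral {0..T} (\<lambda>s. kern (\<phi> t (\<phi> s x))) - 0"
    by (rule Kbar_eqI[where \<phi> = \<phi> and t = t, OF compact_space rkbs universal kern_cont kt
          \<mu>(1) fin_borel_null_measure \<mu>(2) bochner_int_null_measure \<mu>(3) bochner_int_null_measure])
  also have "\<dots> = integral {0..T} ((\<lambda>s. kern (\<phi> s x)) \<circ> (+) t)"
    using semiflow t by (auto simp: semiflow_def intro!: integral_cong)
  finally show ?thesis
    by (simp add: bprime_eq_orbit_integral[OF T] integral_shift_Icc_real)
qed

lemma bprime_in_domC:
  assumes T: "T > 0"
  shows "bprime kern \<phi> T x \<in> domC kern \<phi>"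
proof -
  define f where "f s = kern (\<phi> s x)" for s
  let ?b = "bprime kern \<phi> T x"
  have f_cont: "continuous_on {0..S} f" for S unfolding f_def by (rule continuous_on_kernel_orbit)
  have quotient: "(1 / t) *\<^sub>R integral {T..T+t} f - (1 / t) *\<^sub>R integral {0..0+t} f
      = (1 / t) *\<^sub>R (Kbar kern \<phi> t ?b - ?b)" if t: "0 < t" "t < T" for t
  proof -
    have int: "f integrable_on {0..T+t}" by (rule integrable_continuous_interval[OF f_cont])
    have "integral {0..t} f + integral {t..T+t} f = integral {0..T+t} f"
      and "integral {0..T} f + integral {T..T+t} f = integral {0..T+t} f"
      by (rule Henstock_Kurzweil_Integration.integral_combine[OF _ _ int]; use t in simp)+
    moreover have "Kbar kern \<phi> t ?b = integral {t..T+t} f" "?b = integral {0..T} f"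
      using Kbar_bprime bprime_eq_orbit_integral T t by (simp_all add: f_def[abs_def])
    ultimately have "Kbar kern \<phi> t ?b - ?b = integral {T..T+t} f - integral {0..t} f"
      by (simp add: algebra_simps)
    then show ?thesis by (simp add: scaleR_diff_right)
  qed
  have "((\<lambda>t. (1 / t) *\<^sub>R integral {T..T+t} f - (1 / t) *\<^sub>R integral {0..0+t} f) \<longlongrightarrow> f T - f 0)
      (at_right 0)"
    by (intro tendsto_diff integral_average_tendsto[of T "T + 1"] integral_average_tendsto[of 0 1]
          continuous_on_subset[OF f_cont]) (use T in auto)
  then have "((\<lambda>t. (1 / t) *\<^sub>R (Kbar kern \<phi> t ?b - ?b)) \<longlongrightarrow> f T - f 0) (at_right 0)"
    by (rule Lim_transform_eventually)
       (use eventually_at_right_real[OF T] quotient in \<open>auto elim!: eventually_mono\<close>)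
  then show ?thesis
    unfolding domC_def using bprime_in_Dom T by auto
qed

lemma densely_defined_domC: "densely_defined p (domC kern \<phi>)"
  unfolding densely_defined_def
proof (intro allI impI)
  fix g assume g: "\<forall>h\<in>domC kern \<phi>. p g h = 0"
  have "ev g x = 0" for x
  proof -
    define e where "e s = ev g (\<phi> s x)" for s
    have ev_cont: "continuous_on UNIV (ev g)" using universal unfolding universal_def by blast
    have e_cont: "continuous_on {0..1} e"
      unfolding e_def by (rule continuous_on_compose2[OF ev_cont continuous_on_orbit]) simp
    have "integral {0..T} e = 0" if T: "T > 0" for T
    proof -
      have "integral {0..T} e = integral {0..T} (p g \<circ> (\<lambda>s. kern (\<phi> s x)))"
        by (simp add: e_def[abs_def] o_def rkbs_eval[OF rkbs])
      also have "\<dots> = p g (integral {0..T} (\<lambda>s. kern (\<phi> s x)))"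
        by (rule integral_linear[OF integrable_continuous_interval[OF continuous_on_kernel_orbit]
              rkbs_bounded_linear_pairing[OF rkbs]])
      also have "\<dots> = 0"
        using g bprime_in_domC[OF T] bprime_eq_orbit_integral T by simp
      finally show ?thesis .
    qed
    then have "\<forall>\<^sub>F t in at_right 0. (1 / t) *\<^sub>R integral {0..0+t} e = 0"
      using eventually_at_right_real[of 0 1] by (auto elim!: eventually_mono)
    then have "((\<lambda>t. (1 / t) *\<^sub>R integral {0..0+t} e) \<longlongrightarrow> 0) (at_right 0)"
      by (rule tendsto_eventually)
    moreover have "((\<lambda>t. (1 / t) *\<^sub>R integral {0..0+t} e) \<longlongrightarrow> e 0) (at_right 0)"
      by (rule integral_average_tendsto[OF _ e_cont]) simp
    ultimately have "e 0 = 0" using tendsto_unique[OF trivial_limit_at_right_real] by blast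
    then show ?thesis using semiflow unfolding semiflow_def e_def by simp
  qed
  then show "g = 0" by (rule rkbs_eq_0I[OF rkbs])
qed

end

theorem proposition3:
  fixes ev :: "'b::banach \<Rightarrow> 'a::topological_space \<Rightarrow> complex"
    and ev' :: "'c::banach \<Rightarrow> 'a \<Rightarrow> complex"
    and p :: "'b \<Rightarrow> 'c \<Rightarrow> complex"
    and kern :: "'a \<Rightarrow> 'c"
    and \<phi> :: "real \<Rightarrow> 'a \<Rightarrow> 'a"
  assumes "compact (UNIV :: 'a set)"
    and "rkbs ev ev' p kern"
    and "kernel_lin_indep ev' kern"
    and "universal ev"
    and "continuous_on UNIV kern"
    and "semiflow \<phi>"
    and "continuous_on ({0..} \<times> UNIV) (\<lambda>(t, x). \<phi> t x)"
  shows "(\<forall>T>0. \<forall>x. bprime kern \<phi> T x \<in> domC kern \<phi>) \<and> densely_defined p (domC kern \<phi>)"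
proof -
  interpret kernel_semiflow ev ev' p kern \<phi>
    using assms(1,2,4-7) by unfold_locales
  show ?thesis using bprime_in_domC densely_defined_domC by blast
qed

end
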